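(* Let $U$ be a one-dimensional quantum walk with one defect. Then $U$ is unitary equivalent to \begin{align*} U_{r_\pm,r_0,\nu_1,\nu_2}={}&|e_1^{-1}\rangle\langle r_0e_1^0+e^{i\nu_1}s_0e_2^0|+|e_2^{1}\rangle\langle -e^{i\nu_2}s_0e_1^0+e^{i(\nu_1+\nu_2)}r_0e_2^0|\\ &+\sum_{n\in\mathbb Z\setminus\{0\}}|e_1^{n-1}\rangle\langle r_\pm e_1^n+s_\pm e_2^n|+|e_2^{n+1}\rangle\langle -s_\pm e_1^n+r_\pm e_2^n| \end{align*} for some $0\le r_\pm,r_0\le1$ and $\nu_1,\nu_2\in\mathbb R$, where $s_\varepsilon=\sqrt{1-r_\varepsilon^2}$ ($\varepsilon=\pm,0$). Moreover, writing $U_{r,\nu}=U_{r_\pm,r_0,\nu_1,\nu_2}$, if $0<r_\varepsilon,r'_\varepsilon<1$ and $\nu_i,\nu'_i\in[0,2\pi)$, then $U_{r,\nu}$ and $U_{r',\nu'}$ are unitary equivalent if and only if $r=r'$ and $\nu=\nu'$.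
   Context: Let $\mathcal H_n=\mathbb C^2$ for $n\in\mathbb Z$, $\mathcal H=\bigoplus_{n\in\mathbb Z}\mathcal H_n$, $P_n$ the orthogonal projection onto $\mathcal H_n$, and $\{e_1^n,e_2^n\}$ the standard basis of $\mathcal H_n$; each $\mathcal H_n$ is identified with $\mathbb C^2$. Dirac notation: $|x\rangle\langle y|$ is the operator $z\mapsto\langle y,z\rangle x$ (inner product conjugate-linear in the first argument). A one-dimensional quantum walk is a unitary $U$ on $\mathcal H$ with $\operatorname{rank}(P_nUP_m)=1$ if $m=n\pm1$ and $0$ otherwise. Every such $U$ can be written as $U=\sum_{n\in\mathbb Z}|\xi_{n-1,n}\rangle\langle\zeta_{n-1,n}|+|\xi_{n+1,n}\rangle\langle\zeta_{n+1,n}|$, where $\{\xi_{n,n+1},\xi_{n+1,n}\}_{n}$ and $\{\zeta_{n,n+1},\zeta_{n+1,n}\}_{n}$ are orthonormal bases of $\mathcal H$ with $\xi_{n,n+1},\zeta_{n+1,n}\in\mathcal H_n$ and $\xi_{n+1,n},\zeta_{n,n+1}\in\mathcal H_{n+1}$. $U$ is a one-dimensional quantum walk with one defect if it has such a representation for which there exist $\xi_1,\xi_2,\zeta_1,\zeta_2\in\mathbb C^2$ with $\xi_{n,n+1}=\xi_1$, $\xi_{n,n-1}=\xi_2$, $\zeta_{n-1,n}=\zeta_1$, $\zeta_{n+1,n}=\zeta_2$ for all $n\in\mathbb Z\setminus\{0\}$. Since $U$ and $e^{i\lambda}U$ are identified, unitaries $U_1,U_2$ on $\mathcal H$ are called unitary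 equivalent if there exist $\lambda\in\mathbb R$ and a unitary $W=\bigoplus_nW_n$ ($W_n$ unitary on $\mathcal H_n$) with $e^{i\lambda}WU_1W^*=U_2$. *)

theory Defs
  imports "HOL-Analysis.Analysis"
begin

text \<open>The Hilbert space H = (+)_{n in Z} C^2.  An operator T on H whose block matrix
  P_n T P_m (viewed as a map H_m -> H_n = C^2 -> C^2) vanishes unless |n - m| = 1 is
  represented by its block function  T :: int => int => complex^2^2, T n m = P_n T P_m.\<close>

type_synonym blockop = "int \<Rightarrow> int \<Rightarrow> complex^2^2"

definition e1 :: "complex^2" where "e1 = axis 1 1"
definition e2 :: "complex^2" where "e2 = axis 2 1"

definition cinner :: "complex^2 \<Rightarrow> complex^2 \<Rightarrow> complex" where
  "cinner x y = (\<Sum>i\<in>UNIV. cnj (x $ i) * y $ i)"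

text \<open>Dirac notation |x><y| : z |-> <y,z> x.\<close>
definition ketbra :: "complex^2 \<Rightarrow> complex^2 \<Rightarrow> complex^2^2" where
  "ketbra x y = (\<chi> i j. x $ i * cnj (y $ j))"

definition adj :: "complex^2^2 \<Rightarrow> complex^2^2" where
  "adj A = (\<chi> i j. cnj (A $ j $ i))"

definition unitary2 :: "complex^2^2 \<Rightarrow> bool" where
  "unitary2 W \<longleftrightarrow> adj W ** W = mat 1 \<and> W ** adj W = mat 1"

definition onb2 :: "complex^2 \<Rightarrow> complex^2 \<Rightarrow> bool" where
  "onb2 x y \<longleftrightarrow> cinner x x = 1 \<and> cinner y y = 1 \<and> cinner x y = 0"

text \<open>Unitarity of an operator on H whose blocks vanish unless |n-m| = 1:
  U^*U = I and UU^* = I, blockwise (the block sums are finite).\<close>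
definition nn_unitary :: "blockop \<Rightarrow> bool" where
  "nn_unitary U \<longleftrightarrow>
     (\<forall>n m. (\<Sum>k\<in>{m - 1, m + 1}. adj (U k n) ** U k m) = (if n = m then mat 1 else 0)) \<and>
     (\<forall>n m. (\<Sum>k\<in>{m - 1, m + 1}. U n k ** adj (U m k)) = (if n = m then mat 1 else 0))"

definition qw :: "blockop \<Rightarrow> bool" where
  "qw U \<longleftrightarrow> (\<forall>n m. rank (U n m) = (if m = n + 1 \<or> m = n - 1 then 1 else 0)) \<and> nn_unitary U"

text \<open>One defect.  a n = xi_{n,n+1}, b n = xi_{n,n-1} (in H_n); c n = zeta_{n-1,n},
  d n = zeta_{n+1,n} (in H_n).  The families being orthonormal bases of H with the stated
  locations amounts to {a n, b n} and {c n, d n} being orthonormal bases of H_n = C^2.\<close>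
definition qw_one_defect :: "blockop \<Rightarrow> bool" where
  "qw_one_defect U \<longleftrightarrow> qw U \<and>
     (\<exists>a b c d :: int \<Rightarrow> complex^2.
        (\<forall>n. onb2 (a n) (b n)) \<and> (\<forall>n. onb2 (c n) (d n)) \<and>
        (\<forall>n m. U n m = (if n = m - 1 then ketbra (a n) (c m)
                        else if n = m + 1 then ketbra (b n) (d m) else 0)) \<and>
        (\<exists>\<xi>1 \<xi>2 \<zeta>1 \<zeta>2. \<forall>n. n \<noteq> 0 \<longrightarrow>
             a n = \<xi>1 \<and> b n = \<xi>2 \<and> c n = \<zeta>1 \<and> d n = \<zeta>2))"

definition unit_equiv :: "blockop \<Rightarrow> blockop \<Rightarrow> bool" where
  "unit_equiv U1 U2 \<longleftrightarrow> (\<exists>(th::real) (W :: int \<Rightarrow> complex^2^2). (\<forall>n. unitary2 (W n)) \<and>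
     (\<forall>n m. mat (cis th) ** W n ** U1 n m ** adj (W m) = U2 n m))"

definition sfun :: "real \<Rightarrow> real" where "sfun r = sqrt (1 - r\<^sup>2)"

definition Ustd :: "real \<Rightarrow> real \<Rightarrow> real \<Rightarrow> real \<Rightarrow> blockop" where
  "Ustd rpm r0 \<nu>1 \<nu>2 = (\<lambda>n m.
     if m = 0 then
       (if n = -1 then ketbra e1 (of_real r0 *s e1 + (cis \<nu>1 * of_real (sfun r0)) *s e2)
        else if n = 1 then ketbra e2 ((- cis \<nu>2 * of_real (sfun r0)) *s e1 + (cis (\<nu>1 + \<nu>2) * of_real r0) *s e2)
        else 0)
     else
       (if n = m - 1 then ketbra e1 (of_real rpm *s e1 + of_real (sfun rpm) *s e2)
        else if n = m + 1 then ketbra e2 ((- of_real (sfun rpm)) *s e1 + of_real rpm *s e2)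
        else 0))"

end

theory Submission
  imports Defs
begin

text \<open>Writing the covectors zeta in the frame
  (xi_{n,n+1}, xi_{n,n-1}) of each H_n turns U into a walk in the standard basis whose coin
  pair (u_n, v_n) is orthonormal and constant off the defect. Such a pair is fixed by
  r = |u_1| and three angles, and a diagonal gauge diag(e^{i t_n}, e^{i f_n}) together with a
  global phase shifts these angles by differences of t and f; phases growing linearly in n, with
  a jump at the defect, remove every angle except the two angles nu_1, nu_2 of the defect coin.
  Conversely, an equivalence between two walks in the standard basis is necessarily diagonal,
  and for 0 < r < 1 the bulk coins force the gauge factor of every link to be 1, so the defect
  coin, and with it every parameter, is preserved.\<close>

section \<open>Two-by-two matrices\<close>

lemma e1_e2_nth [simp]: "e1 $ 1 = 1" "e1 $ 2 = 0" "e2 $ 1 = 0" "e2 $ 2 = 1"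
  by (simp_all add: e1_def e2_def axis_def)

lemma ketbra_nth [simp]: "ketbra x y $ i $ j = x $ i * cnj (y $ j)"
  by (simp add: ketbra_def)

lemma adj_nth [simp]: "adj A $ i $ j = cnj (A $ j $ i)"
  by (simp add: adj_def)

lemma mat_nth: "(mat c :: 'a::zero^'n^'n) $ i $ j = (if i = j then c else 0)"
  by (simp add: mat_def)

lemma cinner_2: "cinner x y = cnj (x $ 1) * y $ 1 + cnj (x $ 2) * y $ 2"
  by (simp add: cinner_def sum_2)

lemma cinner_commute: "cinner y x = cnj (cinner x y)"
  by (simp add: cinner_2 mult.commute)

lemma matrix_vector_mult_2:
  "((A::'a::semiring_1^2^2) *v x) $ i = A $ i $ 1 * x $ 1 + A $ i $ 2 * x $ 2"
  by (simp add: matrix_vector_mult_def sum_2)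

lemma matrix_matrix_mult_2:
  "((A::'a::semiring_1^2^2) ** B) $ i $ j = A $ i $ 1 * B $ 1 $ j + A $ i $ 2 * B $ 2 $ j"
  by (simp add: matrix_matrix_mult_def sum_2)

lemma vec_eq_2: "(u::'a^2) = v \<longleftrightarrow> u $ 1 = v $ 1 \<and> u $ 2 = v $ 2"
  by (auto simp: vec_eq_iff forall_2)

lemma matrix_eq_2:
  "(A::'a^2^2) = B \<longleftrightarrow> A$1$1 = B$1$1 \<and> A$1$2 = B$1$2 \<and> A$2$1 = B$2$1 \<and> A$2$2 = B$2$2"
  by (auto simp: vec_eq_iff forall_2)

lemma mat_conj_ketbra:
  fixes W V :: "complex^2^2"
  shows "mat s ** W ** ketbra x y ** adj V = ketbra (W *v x) (cnj s *s (V *v y))"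
  by (simp add: matrix_eq_2 matrix_matrix_mult_2 matrix_vector_mult_2 mat_nth algebra_simps)

lemma ketbra_scale_left: "ketbra (s *s x) y = ketbra x (cnj s *s y)"
  by (simp add: ketbra_def vec_eq_iff algebra_simps)

lemma adj_matrix_mult: "adj (A ** B) = adj B ** adj (A :: complex^2^2)"
  by (simp add: matrix_eq_2 matrix_matrix_mult_2 mult.commute)

lemma adj_mat [simp]: "adj (mat c :: complex^2^2) = mat (cnj c)"
  by (simp add: matrix_eq_2 mat_nth)

lemma mat_mult_left_commute:
  fixes A B :: "complex^2^2"
  shows "mat c ** (A ** B) = A ** (mat c ** B)"
proof -
  have "mat c ** A = A ** mat c"
    by (rule matrix_eq_2[THEN iffD2]) (simp add: matrix_matrix_mult_2 mat_nth mult.commute)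
  then show ?thesis by (metis matrix_mul_assoc)
qed

lemma mat_mult_mat: "mat a ** mat b = (mat (a * b) :: complex^2^2)"
  by (simp add: matrix_eq_2 matrix_matrix_mult_2 mat_nth)

lemma unitary2_mult: "unitary2 A \<Longrightarrow> unitary2 B \<Longrightarrow> unitary2 (A ** B)"
  unfolding unitary2_def adj_matrix_mult
  by (metis matrix_mul_assoc matrix_mul_lid)

lemma unitary2_cinner:
  assumes "unitary2 W"
  shows "cinner (W *v x) (W *v y) = cinner x y"
proof -
  have "cinner (W *v x) (W *v y) =
      cnj (x$1) * y$1 * (adj W ** W)$1$1 + cnj (x$1) * y$2 * (adj W ** W)$1$2
      + cnj (x$2) * y$1 * (adj W ** W)$2$1 + cnj (x$2) * y$2 * (adj W ** W)$2$2"
    by (simp add: cinner_2 matrix_vector_mult_2 matrix_matrix_mult_2 algebra_simps)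
  also have "\<dots> = cinner x y"
    using assms by (simp add: unitary2_def mat_nth cinner_2)
  finally show ?thesis .
qed

lemma unitary2_onb2: "unitary2 W \<Longrightarrow> onb2 x y \<Longrightarrow> onb2 (W *v x) (W *v y)"
  by (simp add: onb2_def unitary2_cinner)

lemma unit_equiv_refl: "unit_equiv U U"
proof -
  have "unitary2 (mat 1)" by (simp add: unitary2_def)
  then show ?thesis unfolding unit_equiv_def
    by (intro exI[of _ 0] exI[of _ "\<lambda>_. mat 1"]) simp
qed

lemma unit_equiv_trans:
  assumes "unit_equiv U V" "unit_equiv V S"
  shows "unit_equiv U S"
proof -
  obtain \<theta> W where W: "\<And>n. unitary2 (W n)"
    and UV: "\<And>n m. mat (cis \<theta>) ** W n ** U n m ** adj (W m) = V n m"
    using assms(1) unfolding unit_equiv_def by blast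
  obtain \<theta>' W' where W': "\<And>n. unitary2 (W' n)"
    and VS: "\<And>n m. mat (cis \<theta>') ** W' n ** V n m ** adj (W' m) = S n m"
    using assms(2) unfolding unit_equiv_def by blast
  have "mat (cis (\<theta> + \<theta>')) ** (W' n ** W n) ** U n m ** adj (W' m ** W m) = S n m" for n m
  proof -
    have phase: "mat (cis (\<theta> + \<theta>')) = (mat (cis \<theta>') ** mat (cis \<theta>) :: complex^2^2)"
      unfolding mat_mult_mat cis_mult by (simp only: add.commute)
    have "mat (cis (\<theta> + \<theta>')) ** (W' n ** W n) ** U n m ** adj (W' m ** W m)
        = mat (cis \<theta>') ** (mat (cis \<theta>) ** (W' n ** (W n ** (U n m ** (adj (W m) ** adj (W' m))))))"
      by (simp only: phase adj_matrix_mult flip: matrix_mul_assoc)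
    also have "\<dots> = mat (cis \<theta>') ** W' n ** (mat (cis \<theta>) ** W n ** U n m ** adj (W m)) ** adj (W' m)"
      by (simp only: mat_mult_left_commute[of "cis \<theta>" "W' n"] flip: matrix_mul_assoc)
    finally show ?thesis by (simp only: UV VS)
  qed
  moreover have "unitary2 (W' n ** W n)" for n
    using W' W by (rule unitary2_mult)
  ultimately show ?thesis
    unfolding unit_equiv_def by (intro exI[of _ "\<theta> + \<theta>'"] exI[of _ "\<lambda>n. W' n ** W n"]) simp
qed

section \<open>Walks given by their coins\<close>

text \<open>walk_op a b c d is the sum over n of |a_{n-1}><c_n| + |b_{n+1}><d_n|, so a, b, c, d
  play the roles of xi_{n,n+1}, xi_{n,n-1}, zeta_{n-1,n}, zeta_{n+1,n}.\<close>
definition walk_op ::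
    "(int \<Rightarrow> complex^2) \<Rightarrow> (int \<Rightarrow> complex^2) \<Rightarrow> (int \<Rightarrow> complex^2) \<Rightarrow> (int \<Rightarrow> complex^2) \<Rightarrow> blockop"
  where "walk_op a b c d n m =
    (if n = m - 1 then ketbra (a n) (c m) else if n = m + 1 then ketbra (b n) (d m) else 0)"

lemma qw_one_defect_walk_op:
  assumes "qw_one_defect U"
  obtains a b c d where "\<And>n. onb2 (a n) (b n)" "\<And>n. onb2 (c n) (d n)" "U = walk_op a b c d"
    "\<And>n. n \<noteq> 0 \<Longrightarrow> a n = a 1 \<and> b n = b 1 \<and> c n = c 1 \<and> d n = d 1"
proof -
  obtain a b c d \<xi>1 \<xi>2 \<zeta>1 \<zeta>2 where ab: "\<forall>n. onb2 (a n) (b n)" and cd: "\<forall>n. onb2 (c n) (d n)"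
    and U: "\<forall>n m. U n m = (if n = m - 1 then ketbra (a n) (c m)
                        else if n = m + 1 then ketbra (b n) (d m) else 0)"
    and const: "\<forall>n. n \<noteq> 0 \<longrightarrow> a n = \<xi>1 \<and> b n = \<xi>2 \<and> c n = \<zeta>1 \<and> d n = \<zeta>2"
    using assms unfolding qw_one_defect_def by (elim conjE exE) (rule that, assumption+)
  show thesis
  proof (rule that)
    show "onb2 (a n) (b n)" "onb2 (c n) (d n)" for n
      using ab cd by simp_all
    show "U = walk_op a b c d"
      using U by (simp add: fun_eq_iff walk_op_def)
    show "a n = a 1 \<and> b n = b 1 \<and> c n = c 1 \<and> d n = d 1" if "n \<noteq> 0" for n
      using const that by simp
  qed
qed

lemma walk_op_conj:
  "mat (cis \<theta>) ** W n ** walk_op a b c d n m ** adj (W m) =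
   walk_op (\<lambda>n. W n *v a n) (\<lambda>n. W n *v b n)
     (\<lambda>m. cnj (cis \<theta>) *s (W m *v c m)) (\<lambda>m. cnj (cis \<theta>) *s (W m *v d m)) n m"
  by (simp add: walk_op_def mat_conj_ketbra)

lemma walk_op_phases:
  "walk_op (\<lambda>n. p n *s e1) (\<lambda>n. q n *s e2) c d =
   walk_op (\<lambda>_. e1) (\<lambda>_. e2) (\<lambda>m. cnj (p (m - 1)) *s c m) (\<lambda>m. cnj (q (m + 1)) *s d m)"
  by (simp add: fun_eq_iff walk_op_def ketbra_scale_left)

definition frame_matrix :: "real \<Rightarrow> real \<Rightarrow> complex^2 \<Rightarrow> complex^2 \<Rightarrow> complex^2^2" where
  "frame_matrix t f a b = (\<chi> i j. if i = 1 then cis t * cnj (a $ j) else cis f * cnj (b $ j))"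

lemma frame_matrix_mult_nth:
  "(frame_matrix t f a b *v v) $ 1 = cis t * cinner a v"
  "(frame_matrix t f a b *v v) $ 2 = cis f * cinner b v"
  by (simp_all add: frame_matrix_def matrix_vector_mult_2 cinner_2 algebra_simps)

lemma unitary2_frame_matrix:
  assumes "onb2 a b"
  shows "unitary2 (frame_matrix t f a b)"
proof -
  let ?F = "frame_matrix t f a b"
  have entries: "(?F ** adj ?F)$1$1 = cis t * cnj (cis t) * cinner a a"
     "(?F ** adj ?F)$1$2 = cis t * cnj (cis f) * cinner a b"
     "(?F ** adj ?F)$2$1 = cis f * cnj (cis t) * cinner b a"
     "(?F ** adj ?F)$2$2 = cis f * cnj (cis f) * cinner b b"
    by (simp_all add: matrix_matrix_mult_2 frame_matrix_def cinner_2 algebra_simps)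
  have "?F ** adj ?F = mat 1"
    using assms cinner_commute[of a b]
    by (simp add: matrix_eq_2 entries mat_nth onb2_def cis_cnj cis_mult)
  then show ?thesis
    unfolding unitary2_def using matrix_left_right_inverse by blast
qed

lemma unit_equiv_walk_op_frame:
  assumes "\<And>n. onb2 (a n) (b n)"
  shows "unit_equiv (walk_op a b c d) (walk_op (\<lambda>_. e1) (\<lambda>_. e2)
    (\<lambda>m. vector [cis (t m - t (m - 1) - \<theta>) * cinner (a m) (c m),
                 cis (f m - t (m - 1) - \<theta>) * cinner (b m) (c m)])
    (\<lambda>m. vector [cis (t m - f (m + 1) - \<theta>) * cinner (a m) (d m),
                 cis (f m - f (m + 1) - \<theta>) * cinner (b m) (d m)]))"
proof -
  define W where "W n = frame_matrix (t n) (f n) (a n) (b n)" for n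
  have W_basis: "W n *v a n = cis (t n) *s e1" "W n *v b n = cis (f n) *s e2" for n
    using assms[of n] cinner_commute[of "a n" "b n"]
    by (simp_all add: vec_eq_2 W_def frame_matrix_mult_nth onb2_def)
  have W_phase: "cnj (cis p) *s (cnj (cis \<theta>) *s (W m *v v)) =
      vector [cis (t m - p - \<theta>) * cinner (a m) v, cis (f m - p - \<theta>) * cinner (b m) v]" for p m v
    by (simp add: vec_eq_2 W_def frame_matrix_mult_nth cis_cnj mult.assoc cis_mult)
      (simp add: algebra_simps)
  have "unitary2 (W n)" for n
    unfolding W_def by (rule unitary2_frame_matrix[OF assms])
  moreover have "mat (cis \<theta>) ** W n ** walk_op a b c d n m ** adj (W m) =
      walk_op (\<lambda>_. e1) (\<lambda>_. e2)
        (\<lambda>m. cnj (cis (t (m - 1))) *s (cnj (cis \<theta>) *s (W m *v c m)))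
        (\<lambda>m. cnj (cis (f (m + 1))) *s (cnj (cis \<theta>) *s (W m *v d m))) n m" for n m
    by (simp only: walk_op_conj W_basis walk_op_phases)
  ultimately show ?thesis
    unfolding unit_equiv_def W_phase by blast
qed

section \<open>Orthonormal bases of C^2 in polar form\<close>

lemma polar_form: "z = of_real (cmod z) * cis (Arg z)"
  by (metis rcis_cmod_Arg rcis_def)

lemma cnj_mult_self: "cnj z * z = of_real ((cmod z)\<^sup>2)"
  by (metis complex_norm_square mult.commute)

lemma cmod_eq_1_iff_cnj_mult_self: "cmod z = 1 \<longleftrightarrow> cnj z * z = 1"
proof -
  have "cmod z = 1 \<longleftrightarrow> (cmod z)\<^sup>2 = 1" by (simp add: abs_square_eq_1)
  also have "\<dots> \<longleftrightarrow> cnj z * z = 1" by (simp only: cnj_mult_self of_real_eq_1_iff)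
  finally show ?thesis .
qed

lemma sfun_eq_cmod:
  assumes "(cmod x)\<^sup>2 + (cmod y)\<^sup>2 = 1"
  shows "sfun (cmod x) = cmod y" "cmod x \<le> 1"
proof -
  have "1 - (cmod x)\<^sup>2 = (cmod y)\<^sup>2" using assms by linarith
  then show "sfun (cmod x) = cmod y" by (simp add: sfun_def)
  have "(cmod x)\<^sup>2 \<le> 1" using assms by (smt (verit) zero_le_power2)
  then show "cmod x \<le> 1" by (simp add: abs_square_le_1)
qed

lemma onb2_second_vector:
  assumes "onb2 u v"
  defines "\<delta> \<equiv> u$1 * v$2 - u$2 * v$1"
  shows "v$1 = - cnj (u$2) * \<delta>" "v$2 = cnj (u$1) * \<delta>" "cmod \<delta> = 1"
    "(cmod (u$1))\<^sup>2 + (cmod (u$2))\<^sup>2 = 1"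
proof -
  have uu: "cnj (u$1) * u$1 + cnj (u$2) * u$2 = 1"
    and uv0: "cnj (u$1) * v$1 + cnj (u$2) * v$2 = 0"
    and vv: "cnj (v$1) * v$1 + cnj (v$2) * v$2 = 1"
    using assms(1) by (simp_all add: onb2_def cinner_2)
  have uv: "cnj (u$2) * v$2 = - (cnj (u$1) * v$1)"
    using uv0 by (simp add: add_eq_0_iff)
  have "- cnj (u$2) * \<delta> = u$1 * (- (cnj (u$2) * v$2)) + cnj (u$2) * u$2 * v$1"
    by (simp add: \<delta>_def algebra_simps)
  also have "\<dots> = v$1 * (cnj (u$1) * u$1 + cnj (u$2) * u$2)"
    unfolding uv by (simp add: algebra_simps)
  also have "\<dots> = v$1" using uu by simp
  finally show v1: "v$1 = - cnj (u$2) * \<delta>" ..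
  have "cnj (u$1) * \<delta> = cnj (u$1) * u$1 * v$2 + (- (cnj (u$1) * v$1)) * u$2"
    by (simp add: \<delta>_def algebra_simps)
  also have "\<dots> = v$2 * (cnj (u$1) * u$1 + cnj (u$2) * u$2)"
    unfolding uv[symmetric] by (simp add: algebra_simps)
  also have "\<dots> = v$2" using uu by simp
  finally show v2: "v$2 = cnj (u$1) * \<delta>" ..
  have "cnj \<delta> * \<delta> * (cnj (u$1) * u$1 + cnj (u$2) * u$2) = 1"
    using vv unfolding v1 v2 by (simp add: algebra_simps)
  then show "cmod \<delta> = 1" using uu by (simp add: cmod_eq_1_iff_cnj_mult_self)
  show "(cmod (u$1))\<^sup>2 + (cmod (u$2))\<^sup>2 = 1"
    using uu unfolding cnj_mult_self by (metis of_real_add of_real_eq_1_iff)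
qed

lemma onb2_polar:
  assumes "onb2 u v"
  defines "r \<equiv> cmod (u$1)"
  obtains \<alpha> \<beta> \<gamma> where "0 \<le> r" "r \<le> 1"
    "u$1 = of_real r * cis \<alpha>" "u$2 = of_real (sfun r) * cis \<beta>"
    "v$1 = of_real (sfun r) * cis (\<gamma> - \<beta> + pi)" "v$2 = of_real r * cis (\<gamma> - \<alpha>)"
proof
  define \<delta> where "\<delta> = u$1 * v$2 - u$2 * v$1"
  note second = onb2_second_vector[OF assms(1), folded \<delta>_def]
  have s: "sfun r = cmod (u$2)" "r \<le> 1"
    unfolding r_def using sfun_eq_cmod second(4) by auto
  have \<delta>: "\<delta> = cis (Arg \<delta>)"
    using polar_form[of \<delta>] second(3) by simp
  have cnj_u: "cnj (u$i) = of_real (cmod (u$i)) * cis (- Arg (u$i))" for i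
    by (subst polar_form) (simp add: cis_cnj)
  show "0 \<le> r" by (simp add: r_def)
  show "r \<le> 1" by (fact s(2))
  show "u$1 = of_real r * cis (Arg (u$1))" unfolding r_def by (rule polar_form)
  show "u$2 = of_real (sfun r) * cis (Arg (u$2))" unfolding s by (rule polar_form)
  have "v$1 = - (of_real (cmod (u$2)) * (cis (Arg \<delta>) * cis (- Arg (u$2))))"
    unfolding second(1) by (subst \<delta>, subst cnj_u) (simp add: algebra_simps)
  then show "v$1 = of_real (sfun r) * cis (Arg \<delta> - Arg (u$2) + pi)"
    by (simp add: s cis_mult flip: minus_cis)
  have "v$2 = of_real (cmod (u$1)) * (cis (Arg \<delta>) * cis (- Arg (u$1)))"
    unfolding second(2) by (subst \<delta>, subst cnj_u) (simp add: algebra_simps)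
  then show "v$2 = of_real r * cis (Arg \<delta> - Arg (u$1))"
    by (simp add: r_def cis_mult)
qed

section \<open>Existence of the standard form\<close>

text \<open>The coins of Ustd, written in polar form (hence the factors cis 0) so that a diagonal
  gauge acts on them by adding angles.\<close>
definition Ustd_left :: "real \<Rightarrow> real \<Rightarrow> real \<Rightarrow> real \<Rightarrow> int \<Rightarrow> complex^2" where
  "Ustd_left r r0 \<nu>1 \<nu>2 m = (if m = 0
     then vector [of_real r0 * cis 0, of_real (sfun r0) * cis \<nu>1]
     else vector [of_real r * cis 0, of_real (sfun r) * cis 0])"

definition Ustd_right :: "real \<Rightarrow> real \<Rightarrow> real \<Rightarrow> real \<Rightarrow> int \<Rightarrow> complex^2" where
  "Ustd_right r r0 \<nu>1 \<nu>2 m = (if m = 0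
     then vector [of_real (sfun r0) * cis (\<nu>2 + pi), of_real r0 * cis (\<nu>1 + \<nu>2)]
     else vector [of_real (sfun r) * cis pi, of_real r * cis 0])"

lemma Ustd_eq_walk_op:
  "Ustd r r0 \<nu>1 \<nu>2 = walk_op (\<lambda>_. e1) (\<lambda>_. e2) (Ustd_left r r0 \<nu>1 \<nu>2) (Ustd_right r r0 \<nu>1 \<nu>2)"
proof -
  have "of_real r0 *s e1 + (cis \<nu>1 * of_real (sfun r0)) *s e2 =
      vector [of_real r0 * cis 0, of_real (sfun r0) * cis \<nu>1]"
    "of_real r *s e1 + of_real (sfun r) *s e2 = vector [of_real r * cis 0, of_real (sfun r) * cis 0]"
    "(- cis \<nu>2 * of_real (sfun r0)) *s e1 + (cis (\<nu>1 + \<nu>2) * of_real r0) *s e2 =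
      vector [of_real (sfun r0) * cis (\<nu>2 + pi), of_real r0 * cis (\<nu>1 + \<nu>2)]"
    "(- of_real (sfun r)) *s e1 + of_real r *s e2 = vector [of_real (sfun r) * cis pi, of_real r * cis 0]"
    by (simp_all add: vec_eq_2 minus_cis mult.commute)
  then show ?thesis
    unfolding fun_eq_iff Ustd_def walk_op_def Ustd_left_def Ustd_right_def by simp
qed

lemma cinner_e1_e2 [simp]: "cinner e1 x = x $ 1" "cinner e2 x = x $ 2"
  by (simp_all add: cinner_2)

lemma onb2_e1_e2: "onb2 e1 e2"
  by (simp add: onb2_def cinner_2)

lemma qw_one_defect_unit_equiv_std_basis:
  assumes "qw_one_defect U"
  obtains u v where "\<And>m. onb2 (u m) (v m)" "\<And>m. m \<noteq> 0 \<Longrightarrow> u m = u 1 \<and> v m = v 1"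
    "unit_equiv U (walk_op (\<lambda>_. e1) (\<lambda>_. e2) u v)"
proof -
  obtain a b c d where ab: "\<And>n. onb2 (a n) (b n)" and cd: "\<And>n. onb2 (c n) (d n)"
    and U: "U = walk_op a b c d"
    and const: "\<And>n. n \<noteq> 0 \<Longrightarrow> a n = a 1 \<and> b n = b 1 \<and> c n = c 1 \<and> d n = d 1"
    using qw_one_defect_walk_op[OF assms] by blast
  define u :: "int \<Rightarrow> complex^2" where "u m = vector [cinner (a m) (c m), cinner (b m) (c m)]" for m
  define v :: "int \<Rightarrow> complex^2" where "v m = vector [cinner (a m) (d m), cinner (b m) (d m)]" for m
  show thesis
  proof (rule that)
    show "unit_equiv U (walk_op (\<lambda>_. e1) (\<lambda>_. e2) u v)"
      using unit_equiv_walk_op_frame[where a=a and b=b and c=c and d=d and t="\<lambda>_. 0"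
          and f="\<lambda>_. 0" and \<theta>=0, OF ab]
      by (simp add: U u_def[abs_def] v_def[abs_def])
    show "onb2 (u m) (v m)" for m
    proof -
      have "u m = frame_matrix 0 0 (a m) (b m) *v c m" "v m = frame_matrix 0 0 (a m) (b m) *v d m"
        by (simp_all add: u_def v_def vec_eq_2 frame_matrix_mult_nth)
      then show ?thesis
        using unitary2_onb2[OF unitary2_frame_matrix[OF ab] cd] by simp
    qed
    show "u m = u 1 \<and> v m = v 1" if "m \<noteq> 0" for m
      using const[OF that] by (simp add: u_def v_def)
  qed
qed

lemma vector_cis_mult_polar:
  assumes "\<phi>1 + \<psi>1 = \<psi>1'" "\<phi>2 + \<psi>2 = \<psi>2'"
  shows "vector [cis \<phi>1 * (of_real R1 * cis \<psi>1), cis \<phi>2 * (of_real R2 * cis \<psi>2)] =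
    vector [of_real R1 * cis \<psi>1', of_real R2 * cis \<psi>2']"
  unfolding assms[symmetric] by (simp add: vec_eq_2 cis_mult[symmetric] ac_simps)

lemma std_basis_walk_unit_equiv_Ustd:
  assumes onb: "\<And>m. onb2 (u m) (v m)" and const: "\<And>m. m \<noteq> 0 \<Longrightarrow> u m = u 1 \<and> v m = v 1"
  obtains r r0 \<nu>1 \<nu>2 where "0 \<le> r" "r \<le> 1" "0 \<le> r0" "r0 \<le> 1"
    "unit_equiv (walk_op (\<lambda>_. e1) (\<lambda>_. e2) u v) (Ustd r r0 \<nu>1 \<nu>2)"
proof -
  define r where "r = cmod (u 1 $ 1)"
  define r0 where "r0 = cmod (u 0 $ 1)"
  obtain \<alpha> \<beta> \<gamma> where r: "0 \<le> r" "r \<le> 1"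
    and u1: "u 1 $ 1 = of_real r * cis \<alpha>" "u 1 $ 2 = of_real (sfun r) * cis \<beta>"
    and v1: "v 1 $ 1 = of_real (sfun r) * cis (\<gamma> - \<beta> + pi)" "v 1 $ 2 = of_real r * cis (\<gamma> - \<alpha>)"
    using onb2_polar[OF onb[of 1], folded r_def] by blast
  obtain \<alpha>0 \<beta>0 \<gamma>0 where r0: "0 \<le> r0" "r0 \<le> 1"
    and u0: "u 0 $ 1 = of_real r0 * cis \<alpha>0" "u 0 $ 2 = of_real (sfun r0) * cis \<beta>0"
    and v0: "v 0 $ 1 = of_real (sfun r0) * cis (\<gamma>0 - \<beta>0 + pi)" "v 0 $ 2 = of_real r0 * cis (\<gamma>0 - \<alpha>0)"
    using onb2_polar[OF onb[of 0], folded r0_def] by blast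
  \<comment> \<open>Gauge phases of slope k with a jump across the defect; k and \<theta> make the bulk coin real.\<close>
  define k where "k = \<gamma> / 2 - \<alpha>"
  define \<theta> where "\<theta> = \<gamma> / 2"
  define t where "t n = of_int n * k + (if n < 0 then \<alpha>0 - \<alpha> else 0)" for n
  define f where "f n = t n + \<alpha> - \<beta> + (if n = 0 then \<alpha>0 - \<alpha> else 0)" for n
  define \<nu>1 where "\<nu>1 = \<beta>0 - \<beta>"
  define \<nu>2 where "\<nu>2 = \<beta> - \<beta>0 + \<gamma>0 - \<gamma>"
  have t_step: "t m = t (m - 1) + k" if "m \<noteq> 0" for m
    using that by (auto simp: t_def algebra_simps)
  have f_nz: "f m = t m + \<alpha> - \<beta>" if "m \<noteq> 0" for m
    using that by (simp add: f_def)
  have f_succ: "f (m + 1) = t m + k + \<alpha> - \<beta>" for m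
    by (cases "m = -1") (auto simp: f_def t_def algebra_simps)
  have t_f_0: "t 0 = 0" "t (-1) = \<alpha>0 - \<alpha> - k" "f 0 = \<alpha>0 - \<beta>" "f 1 = k + \<alpha> - \<beta>"
    by (simp_all add: t_def f_def)
  have left: "vector [cis (t m - t (m - 1) - \<theta>) * u m $ 1, cis (f m - t (m - 1) - \<theta>) * u m $ 2] =
      Ustd_left r r0 \<nu>1 \<nu>2 m" for m
  proof (cases "m = 0")
    case True
    have "vector [cis (t 0 - t (0 - 1) - \<theta>) * u 0 $ 1, cis (f 0 - t (0 - 1) - \<theta>) * u 0 $ 2] =
        vector [of_real r0 * cis 0, of_real (sfun r0) * cis \<nu>1]"
      unfolding u0 by (rule vector_cis_mult_polar) (simp_all add: t_f_0 k_def \<theta>_def \<nu>1_def)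
    then show ?thesis using True by (simp add: Ustd_left_def)
  next
    case False
    have "vector [cis (t m - t (m - 1) - \<theta>) * u 1 $ 1, cis (f m - t (m - 1) - \<theta>) * u 1 $ 2] =
        vector [of_real r * cis 0, of_real (sfun r) * cis 0]"
      unfolding u1 by (rule vector_cis_mult_polar)
        (simp_all add: t_step[OF False] f_nz[OF False] k_def \<theta>_def)
    then show ?thesis using False const[OF False] by (simp add: Ustd_left_def)
  qed
  have right: "vector [cis (t m - f (m + 1) - \<theta>) * v m $ 1, cis (f m - f (m + 1) - \<theta>) * v m $ 2] =
      Ustd_right r r0 \<nu>1 \<nu>2 m" for m
  proof (cases "m = 0")
    case True
    have "vector [cis (t 0 - f 1 - \<theta>) * v 0 $ 1, cis (f 0 - f 1 - \<theta>) * v 0 $ 2] =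
        vector [of_real (sfun r0) * cis (\<nu>2 + pi), of_real r0 * cis (\<nu>1 + \<nu>2)]"
      unfolding v0 by (rule vector_cis_mult_polar) (simp_all add: t_f_0 k_def \<theta>_def \<nu>1_def \<nu>2_def)
    then show ?thesis using True by (simp add: Ustd_right_def)
  next
    case False
    have "vector [cis (t m - f (m + 1) - \<theta>) * v 1 $ 1, cis (f m - f (m + 1) - \<theta>) * v 1 $ 2] =
        vector [of_real (sfun r) * cis pi, of_real r * cis 0]"
      unfolding v1 by (rule vector_cis_mult_polar) (simp_all add: f_succ f_nz[OF False] k_def \<theta>_def)
    then show ?thesis using False const[OF False] by (simp add: Ustd_right_def)
  qed
  have "unit_equiv (walk_op (\<lambda>_. e1) (\<lambda>_. e2) u v) (Ustd r r0 \<nu>1 \<nu>2)"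
    using unit_equiv_walk_op_frame[where a="\<lambda>_. e1" and b="\<lambda>_. e2" and c=u and d=v and t=t
        and f=f and \<theta>=\<theta>, OF onb2_e1_e2]
    by (simp add: Ustd_eq_walk_op left right)
  with r r0 show thesis by (rule that)
qed

section \<open>Uniqueness of the standard form\<close>

lemma ketbra_eq_ketbra_axis:
  assumes eq: "ketbra x y = ketbra (axis i 1) y'" and "y' \<noteq> 0"
  shows "x = x $ i *s axis i 1" "y' = cnj (x $ i) *s y"
proof -
  have E: "x $ k * cnj (y $ l) = axis i 1 $ k * cnj (y' $ l)" for k l
    using eq by (metis ketbra_nth)
  obtain j where "y' $ j \<noteq> 0"
    using assms(2) by (auto simp: vec_eq_iff)
  with E[of i j] have "y $ j \<noteq> 0" by (auto simp: axis_def)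
  then have "x $ k = 0" if "k \<noteq> i" for k
    using E[of k j] that by (simp add: axis_def)
  then show "x = x $ i *s axis i 1"
    by (auto simp: vec_eq_iff axis_def)
  show "y' = cnj (x $ i) *s y"
    using E[of i] by (simp add: vec_eq_iff axis_def) (metis complex_cnj_cnj complex_cnj_mult)
qed

text \<open>Only e1 jumps to the left and only e2 to the right, so the conjugating unitaries must
  preserve both directions.\<close>
lemma unit_equiv_std_basis_walk_diagonal:
  assumes "unit_equiv (walk_op (\<lambda>_. e1) (\<lambda>_. e2) c d) (walk_op (\<lambda>_. e1) (\<lambda>_. e2) c' d')"
    and c'_nz: "\<And>m. c' m \<noteq> 0" and d'_nz: "\<And>m. d' m \<noteq> 0"
  obtains \<omega> p q where "cmod \<omega> = 1" "\<And>n. cmod (p n) = 1" "\<And>n. cmod (q n) = 1"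
    "\<And>m. c' m = (cnj (p (m - 1)) * \<omega>) *s vector [p m * c m $ 1, q m * c m $ 2]"
    "\<And>m. d' m = (cnj (q (m + 1)) * \<omega>) *s vector [p m * d m $ 1, q m * d m $ 2]"
proof -
  obtain \<theta> W where W: "\<And>n. unitary2 (W n)"
    and eq: "\<And>n m. mat (cis \<theta>) ** W n ** walk_op (\<lambda>_. e1) (\<lambda>_. e2) c d n m ** adj (W m) =
      walk_op (\<lambda>_. e1) (\<lambda>_. e2) c' d' n m"
    using assms(1) unfolding unit_equiv_def by blast
  define \<omega> where "\<omega> = cnj (cis \<theta>)"
  have left: "ketbra (W (m - 1) *v e1) (\<omega> *s (W m *v c m)) = ketbra e1 (c' m)" for m
    using eq[of "m - 1" m] by (simp add: walk_op_def mat_conj_ketbra \<omega>_def)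
  have right: "ketbra (W (m + 1) *v e2) (\<omega> *s (W m *v d m)) = ketbra e2 (d' m)" for m
    using eq[of "m + 1" m] by (simp add: walk_op_def mat_conj_ketbra \<omega>_def)
  note left_axis = ketbra_eq_ketbra_axis[OF left[unfolded e1_def] c'_nz, folded e1_def]
  note right_axis = ketbra_eq_ketbra_axis[OF right[unfolded e2_def] d'_nz, folded e2_def]
  define p where "p n = W n $ 1 $ 1" for n
  define q where "q n = W n $ 2 $ 2" for n
  have W_diag: "W n $ 2 $ 1 = 0" "W n $ 1 $ 2 = 0" for n
    using arg_cong[OF left_axis(1)[of "n + 1"], of "\<lambda>x. x $ 2"]
      arg_cong[OF right_axis(1)[of "n - 1"], of "\<lambda>x. x $ 1"]
    by (simp_all add: matrix_vector_mult_2)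
  have W_mult: "W n *v x = vector [p n * x $ 1, q n * x $ 2]" for n x
    by (simp add: vec_eq_2 matrix_vector_mult_2 W_diag p_def q_def)
  have "cmod (p n) = 1 \<and> cmod (q n) = 1" for n
  proof -
    have "(adj (W n) ** W n) $ 1 $ 1 = 1" "(adj (W n) ** W n) $ 2 $ 2 = 1"
      using W[of n] by (simp_all add: unitary2_def mat_nth)
    then show ?thesis
      by (simp add: matrix_matrix_mult_2 W_diag p_def q_def cmod_eq_1_iff_cnj_mult_self)
  qed
  moreover have "c' m = (cnj (p (m - 1)) * \<omega>) *s vector [p m * c m $ 1, q m * c m $ 2]" for m
    using left_axis(2)[of m] by (simp add: W_mult matrix_vector_mult_2 p_def)
  moreover have "d' m = (cnj (q (m + 1)) * \<omega>) *s vector [p m * d m $ 1, q m * d m $ 2]" for m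
    using right_axis(2)[of m] by (simp add: W_mult matrix_vector_mult_2 q_def)
  moreover have "cmod \<omega> = 1" by (simp add: \<omega>_def)
  ultimately show thesis using that by blast
qed

lemma unit_scale_pos_real_eq:
  assumes "cmod g = 1" "of_real b = g * of_real a" "0 < a" "0 \<le> b"
  shows "a = b" "g = 1"
proof -
  have "cmod (of_real b) = cmod (g * of_real a)" using assms(2) by simp
  then show "a = b" using assms(1,3,4) by (simp add: norm_mult)
  with assms(2,3) show "g = 1" by simp
qed

lemma unit_phase_swap_iff:
  assumes "cmod p = 1" "cmod q = 1" "cnj p * \<omega> * q = 1"
  shows "cnj q * \<omega> * p = 1 \<longleftrightarrow> \<omega> * \<omega> = 1"
proof -
  have unit: "cnj p * p = 1" "cnj q * q = 1"
    using assms(1,2) by (simp_all add: cmod_eq_1_iff_cnj_mult_self)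
  have "cnj q * \<omega> * p = (cnj p * \<omega> * q) * (cnj q * \<omega> * p)"
    using assms(3) by simp
  also have "\<dots> = \<omega> * \<omega> * (cnj p * p) * (cnj q * q)"
    by (simp add: ac_simps)
  also have "\<dots> = \<omega> * \<omega>"
    using unit by simp
  finally have "cnj q * \<omega> * p = \<omega> * \<omega>" .
  then show ?thesis by (simp only:)
qed

lemma cis_inj_on_0_2pi:
  assumes "a \<in> {0..<2*pi}" "b \<in> {0..<2*pi}" "cis a = cis b"
  shows "a = b"
proof -
  have Arg_shift: "Arg (cis (pi - x)) = pi - x" if "x \<in> {0..<2*pi}" for x
    by (rule cis_Arg_unique) (use that in \<open>auto simp: sgn_if\<close>)
  have "cis (pi - a) = cis (pi - b)"
    using assms(3) by (metis cis_divide)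
  then have "Arg (cis (pi - a)) = Arg (cis (pi - b))" by simp
  then show ?thesis
    unfolding Arg_shift[OF assms(1)] Arg_shift[OF assms(2)] by simp
qed

lemma sfun_pos: "0 < r \<Longrightarrow> r < 1 \<Longrightarrow> 0 < sfun r"
  unfolding sfun_def by (simp add: power_less_one_iff abs_square_less_1)

text \<open>Rigidity of the bulk: an equivalence between two standard forms with 0 < r < 1 has
  gauge factor 1 on every link of the bulk, so on the defect coin it can only rescale r0.\<close>
lemma Ustd_unit_equiv_defect_coin:
  assumes r: "0 < r" "r < 1" "0 < r'" "0 < r0'"
    and ue: "unit_equiv (Ustd r r0 \<nu>1 \<nu>2) (Ustd r' r0' \<nu>1' \<nu>2')"
  obtains g where "cmod g = 1" "r = r'" "of_real r0' = g * of_real r0"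
    "of_real (sfun r0') * cis \<nu>1' = of_real (sfun r0) * cis \<nu>1"
    "of_real (sfun r0') * cis (\<nu>2' + pi) = of_real (sfun r0) * cis (\<nu>2 + pi)"
proof -
  let ?c = "Ustd_left r r0 \<nu>1 \<nu>2" and ?d = "Ustd_right r r0 \<nu>1 \<nu>2"
  let ?c' = "Ustd_left r' r0' \<nu>1' \<nu>2'" and ?d' = "Ustd_right r' r0' \<nu>1' \<nu>2'"
  have "?c' m \<noteq> 0" "?d' m \<noteq> 0" for m
    using r by (auto simp: Ustd_left_def Ustd_right_def vec_eq_2)
  then obtain \<omega> p q where \<omega>: "cmod \<omega> = 1" and p: "\<And>n. cmod (p n) = 1" and q: "\<And>n. cmod (q n) = 1"
    and c': "\<And>m. ?c' m = (cnj (p (m - 1)) * \<omega>) *s vector [p m * ?c m $ 1, q m * ?c m $ 2]"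
    and d': "\<And>m. ?d' m = (cnj (q (m + 1)) * \<omega>) *s vector [p m * ?d m $ 1, q m * ?d m $ 2]"
    using unit_equiv_std_basis_walk_diagonal[OF ue[unfolded Ustd_eq_walk_op]] by blast
  have L1: "?c' m $ 1 = cnj (p (m - 1)) * \<omega> * p m * ?c m $ 1"
    and L2: "?c' m $ 2 = cnj (p (m - 1)) * \<omega> * q m * ?c m $ 2"
    and R1: "?d' m $ 1 = cnj (q (m + 1)) * \<omega> * p m * ?d m $ 1" for m
    using c'[of m] d'[of m] by (simp_all add: mult.assoc)
  have unit: "cmod (cnj x * \<omega> * y) = 1" if "cmod x = 1" "cmod y = 1" for x y
    using that \<omega> by (simp add: norm_mult)
  note real_eq = unit_scale_pos_real_eq[OF unit]
  have s: "0 < sfun r"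
    using sfun_pos r by auto
  have left1: "of_real r' = cnj (p 0) * \<omega> * p 1 * of_real r"
    using L1[of 1] by (simp add: Ustd_left_def)
  have r_eq: "r = r'"
    using real_eq(1)[OF p p left1 r(1)] r(3) by simp
  have left2: "of_real (sfun r) = cnj (p 0) * \<omega> * q 1 * of_real (sfun r)"
    using L2[of 1] r_eq by (simp add: Ustd_left_def)
  have g01: "cnj (p 0) * \<omega> * q 1 = 1"
    using real_eq(2)[OF p q left2 s] s by simp
  have left2_2: "of_real (sfun r) = cnj (p 1) * \<omega> * q 2 * of_real (sfun r)"
    using L2[of 2] r_eq by (simp add: Ustd_left_def)
  have g12: "cnj (p 1) * \<omega> * q 2 = 1"
    using real_eq(2)[OF p q left2_2 s] s by simp
  have right1: "of_real (sfun r) = cnj (q 2) * \<omega> * p 1 * of_real (sfun r)"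
    using R1[of 1] r_eq by (simp add: Ustd_right_def)
  have "cnj (q 2) * \<omega> * p 1 = 1"
    using real_eq(2)[OF q p right1 s] s by simp
  then have \<omega>\<omega>: "\<omega> * \<omega> = 1"
    using unit_phase_swap_iff[OF p q g12] by simp
  have right_m1: "of_real (sfun r) = cnj (q 0) * \<omega> * p (-1) * of_real (sfun r)"
    using R1[of "-1"] r_eq by (simp add: Ustd_right_def)
  have "cnj (q 0) * \<omega> * p (-1) = 1"
    using real_eq(2)[OF q p right_m1 s] s by simp
  then have "cnj (p (-1)) * \<omega> * q 0 = 1"
    using unit_phase_swap_iff[OF q p] \<omega>\<omega> by simp
  moreover have "cnj (q 1) * \<omega> * p 0 = 1"
    using unit_phase_swap_iff[OF p q g01] \<omega>\<omega> by simp
  ultimately show thesis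
    using that[OF unit[OF p[of "-1"] p[of 0]] r_eq] L1[of 0] L2[of 0] R1[of 0]
    by (simp add: Ustd_left_def Ustd_right_def)
qed

lemma Ustd_unit_equiv_imp_eq:
  assumes r: "0 < r" "r < 1" "0 < r0" "r0 < 1" "0 < r'" "0 < r0'"
    and \<nu>: "\<nu>1 \<in> {0..<2*pi}" "\<nu>2 \<in> {0..<2*pi}" "\<nu>1' \<in> {0..<2*pi}" "\<nu>2' \<in> {0..<2*pi}"
    and ue: "unit_equiv (Ustd r r0 \<nu>1 \<nu>2) (Ustd r' r0' \<nu>1' \<nu>2')"
  shows "r = r' \<and> r0 = r0' \<and> \<nu>1 = \<nu>1' \<and> \<nu>2 = \<nu>2'"
proof -
  obtain g where g: "cmod g = 1" and r_eq: "r = r'" and r0': "of_real r0' = g * of_real r0"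
    and \<nu>1': "of_real (sfun r0') * cis \<nu>1' = of_real (sfun r0) * cis \<nu>1"
    and \<nu>2': "of_real (sfun r0') * cis (\<nu>2' + pi) = of_real (sfun r0) * cis (\<nu>2 + pi)"
    using Ustd_unit_equiv_defect_coin[OF r(1,2,5,6) ue] by blast
  have r0_eq: "r0 = r0'"
    using unit_scale_pos_real_eq(1)[OF g r0' r(3)] r(6) by simp
  have s: "sfun r0 \<noteq> 0"
    using sfun_pos[OF r(3,4)] by simp
  have "\<nu>1 = \<nu>1'"
    using \<nu>1' s r0_eq cis_inj_on_0_2pi[OF \<nu>(1,3)] by simp
  moreover have "\<nu>2 = \<nu>2'"
    using \<nu>2' s r0_eq cis_inj_on_0_2pi[OF \<nu>(2,4)] by (simp flip: minus_cis)
  ultimately show ?thesis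
    using r_eq r0_eq by simp
qed

theorem corollary2p11:
  shows "(\<forall>U. qw_one_defect U \<longrightarrow>
            (\<exists>rpm r0 \<nu>1 \<nu>2. 0 \<le> rpm \<and> rpm \<le> 1 \<and> 0 \<le> r0 \<and> r0 \<le> 1 \<and>
                unit_equiv U (Ustd rpm r0 \<nu>1 \<nu>2)))
       \<and> (\<forall>rpm r0 \<nu>1 \<nu>2 rpm' r0' \<nu>1' \<nu>2'.
            0 < rpm \<and> rpm < 1 \<and> 0 < r0 \<and> r0 < 1 \<and>
            0 < rpm' \<and> rpm' < 1 \<and> 0 < r0' \<and> r0' < 1 \<and>
            \<nu>1 \<in> {0..<2*pi} \<and> \<nu>2 \<in> {0..<2*pi} \<and> \<nu>1' \<in> {0..<2*pi} \<and> \<nu>2' \<in> {0..<2*pi} \<longrightarrow>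
            (unit_equiv (Ustd rpm r0 \<nu>1 \<nu>2) (Ustd rpm' r0' \<nu>1' \<nu>2') \<longleftrightarrow>
             rpm = rpm' \<and> r0 = r0' \<and> \<nu>1 = \<nu>1' \<and> \<nu>2 = \<nu>2'))"
proof (intro conjI allI impI)
  fix U assume "qw_one_defect U"
  then obtain u v where onb: "\<And>m. onb2 (u m) (v m)"
    and const: "\<And>m. m \<noteq> 0 \<Longrightarrow> u m = u 1 \<and> v m = v 1"
    and U_std: "unit_equiv U (walk_op (\<lambda>_. e1) (\<lambda>_. e2) u v)"
    using qw_one_defect_unit_equiv_std_basis by blast
  obtain r r0 \<nu>1 \<nu>2 where bounds: "0 \<le> r" "r \<le> 1" "0 \<le> r0" "r0 \<le> 1"
    and std_Ustd: "unit_equiv (walk_op (\<lambda>_. e1) (\<lambda>_. e2) u v) (Ustd r r0 \<nu>1 \<nu>2)"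
    using std_basis_walk_unit_equiv_Ustd[where u=u and v=v, OF onb const] by blast
  show "\<exists>rpm r0 \<nu>1 \<nu>2. 0 \<le> rpm \<and> rpm \<le> 1 \<and> 0 \<le> r0 \<and> r0 \<le> 1 \<and>
      unit_equiv U (Ustd rpm r0 \<nu>1 \<nu>2)"
    using bounds unit_equiv_trans[OF U_std std_Ustd] by blast
next
  fix rpm r0 \<nu>1 \<nu>2 rpm' r0' \<nu>1' \<nu>2' :: real
  assume "0 < rpm \<and> rpm < 1 \<and> 0 < r0 \<and> r0 < 1 \<and> 0 < rpm' \<and> rpm' < 1 \<and> 0 < r0' \<and> r0' < 1 \<and>
    \<nu>1 \<in> {0..<2*pi} \<and> \<nu>2 \<in> {0..<2*pi} \<and> \<nu>1' \<in> {0..<2*pi} \<and> \<nu>2' \<in> {0..<2*pi}"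
  then have r: "0 < rpm" "rpm < 1" "0 < r0" "r0 < 1" "0 < rpm'" "0 < r0'"
    and \<nu>: "\<nu>1 \<in> {0..<2*pi}" "\<nu>2 \<in> {0..<2*pi}" "\<nu>1' \<in> {0..<2*pi}" "\<nu>2' \<in> {0..<2*pi}"
    by auto
  show "unit_equiv (Ustd rpm r0 \<nu>1 \<nu>2) (Ustd rpm' r0' \<nu>1' \<nu>2') \<longleftrightarrow>
      rpm = rpm' \<and> r0 = r0' \<and> \<nu>1 = \<nu>1' \<and> \<nu>2 = \<nu>2'"
    using Ustd_unit_equiv_imp_eq[OF r \<nu>] unit_equiv_refl by auto
qed

end
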